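(* Let $\Gamma$ be a countable group and let $\mathcal P\subseteq\mathrm{Sub}_{[\infty]}(\Gamma)$ be any subset satisfying condition $(\ast)$. Let $\overline{\mathcal P}$ denote the closure of $\mathcal P$ in $\mathrm{Sub}_{[\infty]}(\Gamma)$. Then $\mathcal{HT}(\Gamma)\cap\overline{\mathcal P}$ is a dense $G_\delta$ subset of $\overline{\mathcal P}$.
   Context: $\mathrm{Sub}(\Gamma)$ is the set of subgroups with the topology generated by the clopen sets $\{\Lambda:\mathcal I\subseteq\Lambda,\ \mathcal O\cap\Lambda=\emptyset\}$, $\mathcal I,\mathcal O$ finite; $\mathrm{Sub}_{[\infty]}(\Gamma)$ is the subspace of infinite index subgroups. $\mathcal{HT}(\Gamma)$ is the set of infinite index $\Lambda$ with $\Lambda\backslash\Gamma\curvearrowleft\Gamma$ (right multiplication) highly transitive. Condition $(\ast)$ for $\mathcal P$: for every $\Lambda\in\mathcal P$, every $d\ge1$, every $g_1,\dots,g_{2d}\in\Gamma$ with $\Lambda g_1,\dots,\Lambda g_{2d}$ pairwise distinct, and every neighborhood $\mathcal V$ of $\Lambda$, there exist $\Lambda'\in\mathcal P\cap\mathcal V$ and $\gamma\in\Gamma$ with $\Lambda' g_i\gamma=\Lambda' g_{i+d}$ for all $i\in\{1,\dots,d\}$. *)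

theory Defs
  imports "HOL-Analysis.Analysis" "HOL-Algebra.Algebra"
begin

definition Sub_top :: "('a, 'b) monoid_scheme \<Rightarrow> 'a set topology" where
  "Sub_top G = topology_generated_by
     {{\<Lambda>. subgroup \<Lambda> G \<and> I \<subseteq> \<Lambda> \<and> Out \<inter> \<Lambda> = {}} | I Out.
        finite I \<and> finite Out \<and> I \<subseteq> carrier G \<and> Out \<subseteq> carrier G}"

definition Sub_inf_top :: "('a, 'b) monoid_scheme \<Rightarrow> 'a set topology" where
  "Sub_inf_top G = subtopology (Sub_top G)
     {\<Lambda>. subgroup \<Lambda> G \<and> infinite (rcosets\<^bsub>G\<^esub> \<Lambda>)}"

definition highly_transitive_coset_action :: "('a, 'b) monoid_scheme \<Rightarrow> 'a set \<Rightarrow> bool" where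
  "highly_transitive_coset_action G \<Lambda> \<longleftrightarrow>
     (\<forall>n::nat. \<forall>x y. (\<forall>i<n. x i \<in> rcosets\<^bsub>G\<^esub> \<Lambda> \<and> y i \<in> rcosets\<^bsub>G\<^esub> \<Lambda>)
        \<and> inj_on x {..<n} \<and> inj_on y {..<n} \<longrightarrow>
        (\<exists>\<gamma>\<in>carrier G. \<forall>i<n. x i #>\<^bsub>G\<^esub> \<gamma> = y i))"

definition HT :: "('a, 'b) monoid_scheme \<Rightarrow> 'a set set" where
  "HT G = {\<Lambda>. subgroup \<Lambda> G \<and> infinite (rcosets\<^bsub>G\<^esub> \<Lambda>)
               \<and> highly_transitive_coset_action G \<Lambda>}"

definition cond_star :: "('a, 'b) monoid_scheme \<Rightarrow> 'a set set \<Rightarrow> bool" where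
  "cond_star G P \<longleftrightarrow>
     (\<forall>\<Lambda>\<in>P. \<forall>d::nat. d \<ge> 1 \<longrightarrow>
       (\<forall>g::nat \<Rightarrow> 'a. (\<forall>i\<in>{1..2*d}. g i \<in> carrier G)
          \<and> inj_on (\<lambda>i. \<Lambda> #>\<^bsub>G\<^esub> g i) {1..2*d} \<longrightarrow>
        (\<forall>V. openin (Sub_inf_top G) V \<and> \<Lambda> \<in> V \<longrightarrow>
          (\<exists>\<Lambda>'\<in>P \<inter> V. \<exists>\<gamma>\<in>carrier G. \<forall>i\<in>{1..d}.
              (\<Lambda>' #>\<^bsub>G\<^esub> g i) #>\<^bsub>G\<^esub> \<gamma> = \<Lambda>' #>\<^bsub>G\<^esub> g (i + d)))))"

end

theory Submission
  imports Defs
begin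

text \<open>
  Relative to the infinite index subgroups, high transitivity is the conjunction, over the
  countably many pairs of equally long tuples \<open>xs, ys\<close> in \<open>\<Gamma>\<close>, of the open condition
  ``if the cosets \<open>\<Lambda> xs\<^sub>i\<close> are pairwise distinct and so are the \<open>\<Lambda> ys\<^sub>i\<close>, then some \<open>\<gamma>\<close>
  maps \<open>\<Lambda> xs\<^sub>i\<close> to \<open>\<Lambda> ys\<^sub>i\<close> for all \<open>i\<close>''; this gives the \<open>G\<^sub>\<delta>\<close> part. Each condition is
  dense in the closure of \<open>\<P>\<close>: choose cosets \<open>\<Lambda> ks\<^sub>i\<close> different from all \<open>\<Lambda> xs\<^sub>i\<close> and \<open>\<Lambda> ys\<^sub>i\<close>, use
  \<open>(\<ast>)\<close> once to move \<open>xs\<close> onto \<open>ks\<close>, then once more, inside the neighbourhood that remembers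
  the first move, to move \<open>ks\<close> onto \<open>ys\<close>. Instead of invoking Baire's theorem, a generic subgroup
  is built directly: enumerating \<open>\<Gamma>\<close>, one decides membership of one element at a time while
  passing to smaller cylinder neighbourhoods that still meet \<open>\<P>\<close> and lie in the next of the
  countably many open sets; having at least \<open>k\<close> cosets is one of these open conditions for
  each \<open>k\<close>, which keeps the limit of infinite index.
\<close>

section \<open>Cylinders in the space of subgroups\<close>

definition cylinder :: "('a, 'b) monoid_scheme \<Rightarrow> 'a set \<Rightarrow> 'a set \<Rightarrow> 'a set set" where
  "cylinder G I E = {\<Lambda>. subgroup \<Lambda> G \<and> I \<subseteq> \<Lambda> \<and> E \<inter> \<Lambda> = {}}"

definition finite_in :: "('a, 'b) monoid_scheme \<Rightarrow> 'a set \<Rightarrow> bool" where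
  "finite_in G A \<longleftrightarrow> finite A \<and> A \<subseteq> carrier G"

abbreviation cylinders :: "('a, 'b) monoid_scheme \<Rightarrow> 'a set set set" where
  "cylinders G \<equiv> {cylinder G I E | I E. finite_in G I \<and> finite_in G E}"

lemma cylinder_in_cylinders: "finite_in G I \<Longrightarrow> finite_in G E \<Longrightarrow> cylinder G I E \<in> cylinders G"
  by blast

lemma finite_in_empty [simp]: "finite_in G {}"
  unfolding finite_in_def by simp

lemma finite_in_Un: "finite_in G A \<Longrightarrow> finite_in G B \<Longrightarrow> finite_in G (A \<union> B)"
  unfolding finite_in_def by simp

lemma finite_in_insert: "finite_in G A \<Longrightarrow> a \<in> carrier G \<Longrightarrow> finite_in G (insert a A)"
  unfolding finite_in_def by simp

lemma cylinder_Int: "cylinder G I E \<inter> cylinder G I' E' = cylinder G (I \<union> I') (E \<union> E')"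
  unfolding cylinder_def by blast

lemma cylinder_antimono: "I \<subseteq> I' \<Longrightarrow> E \<subseteq> E' \<Longrightarrow> cylinder G I' E' \<subseteq> cylinder G I E"
  unfolding cylinder_def by blast

lemma Sub_top_eq_cylinders: "Sub_top G = topology_generated_by (cylinders G)"
  unfolding Sub_top_def cylinder_def finite_in_def by (intro arg_cong[where f=topology_generated_by]) blast

lemma topspace_Sub_top: "topspace (Sub_top G) = {\<Lambda>. subgroup \<Lambda> G}"
proof -
  have "\<Union>(cylinders G) = {\<Lambda>. subgroup \<Lambda> G}"
  proof
    show "\<Union>(cylinders G) \<subseteq> {\<Lambda>. subgroup \<Lambda> G}"
      unfolding cylinder_def by auto
    have "cylinder G {} {} = {\<Lambda>. subgroup \<Lambda> G}"
      unfolding cylinder_def by simp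
    moreover have "cylinder G {} {} \<subseteq> \<Union>(cylinders G)"
      by (intro Union_upper cylinder_in_cylinders finite_in_empty)
    ultimately show "{\<Lambda>. subgroup \<Lambda> G} \<subseteq> \<Union>(cylinders G)"
      by simp
  qed
  then show ?thesis
    unfolding Sub_top_eq_cylinders topology_generated_by_topspace .
qed

lemma openin_Sub_top_cylinder:
  "finite_in G I \<Longrightarrow> finite_in G E \<Longrightarrow> openin (Sub_top G) (cylinder G I E)"
  unfolding Sub_top_eq_cylinders by (intro topology_generated_by_Basis cylinder_in_cylinders)

lemma cylinders_Int:
  assumes "C \<in> cylinders G" "C' \<in> cylinders G"
  shows "C \<inter> C' \<in> cylinders G"
proof -
  obtain I E I' E' where IE: "finite_in G I" "finite_in G E" "finite_in G I'" "finite_in G E'"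
    and "C = cylinder G I E" "C' = cylinder G I' E'"
    using assms by blast
  then have "C \<inter> C' = cylinder G (I \<union> I') (E \<union> E')"
    by (simp add: cylinder_Int)
  then show ?thesis
    by (simp only:) (intro cylinder_in_cylinders finite_in_Un IE)
qed

lemma openin_Sub_top_cylinder_nbhd:
  assumes "openin (Sub_top G) U" "\<Lambda> \<in> U"
  obtains I E where "finite_in G I" "finite_in G E" "\<Lambda> \<in> cylinder G I E" "cylinder G I E \<subseteq> U"
proof -
  have "generate_topology_on (cylinders G) U"
    using assms(1) unfolding Sub_top_eq_cylinders by (rule openin_topology_generated_by)
  then have "\<exists>C\<in>cylinders G. \<Lambda> \<in> C \<and> C \<subseteq> U"
    using assms(2)
  proof (induction arbitrary: \<Lambda>)
    case (Int a b)
    then obtain C C' where "C \<in> cylinders G" "\<Lambda> \<in> C" "C \<subseteq> a" "C' \<in> cylinders G" "\<Lambda> \<in> C'" "C' \<subseteq> b"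
      by (meson IntE)
    then show ?case
      by (intro bexI[of _ "C \<inter> C'"] conjI cylinders_Int) auto
  next
    case (UN K)
    then obtain k C where "k \<in> K" "C \<in> cylinders G" "\<Lambda> \<in> C" "C \<subseteq> k"
      by (meson UnionE)
    then show ?case
      by (intro bexI[of _ C]) auto
  qed auto
  then show thesis
    using that by blast
qed

lemma openin_Sub_topI:
  assumes "\<And>\<Lambda>. \<Lambda> \<in> U \<Longrightarrow> \<exists>I E. finite_in G I \<and> finite_in G E \<and> \<Lambda> \<in> cylinder G I E \<and> cylinder G I E \<subseteq> U"
  shows "openin (Sub_top G) U"
proof (subst openin_subopen, intro ballI)
  fix \<Lambda> assume "\<Lambda> \<in> U"
  with assms obtain I E where "finite_in G I" "finite_in G E" "\<Lambda> \<in> cylinder G I E" "cylinder G I E \<subseteq> U"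
    by blast
  then show "\<exists>T. openin (Sub_top G) T \<and> \<Lambda> \<in> T \<and> T \<subseteq> U"
    by (intro exI[of _ "cylinder G I E"] conjI openin_Sub_top_cylinder)
qed

lemma topspace_Sub_inf_top:
  "topspace (Sub_inf_top G) = {\<Lambda>. subgroup \<Lambda> G \<and> infinite (rcosets\<^bsub>G\<^esub> \<Lambda>)}"
  unfolding Sub_inf_top_def topspace_subtopology topspace_Sub_top by auto

lemma openin_Sub_inf_top_iff:
  "openin (Sub_inf_top G) T \<longleftrightarrow> (\<exists>U. openin (Sub_top G) U \<and> T = U \<inter> topspace (Sub_inf_top G))"
  unfolding topspace_Sub_inf_top unfolding Sub_inf_top_def openin_subtopology ..

lemma openin_Sub_inf_top_Int:
  "openin (Sub_top G) U \<Longrightarrow> openin (Sub_inf_top G) (U \<inter> topspace (Sub_inf_top G))"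
  unfolding openin_Sub_inf_top_iff by (rule exI[of _ U]) simp

lemma in_Sub_inf_top_closure_iff:
  assumes "S \<subseteq> topspace (Sub_inf_top G)"
  shows "\<Lambda> \<in> Sub_inf_top G closure_of S \<longleftrightarrow> \<Lambda> \<in> topspace (Sub_inf_top G) \<and>
     (\<forall>I E. finite_in G I \<longrightarrow> finite_in G E \<longrightarrow> \<Lambda> \<in> cylinder G I E \<longrightarrow> cylinder G I E \<inter> S \<noteq> {})"
    (is "_ \<longleftrightarrow> _ \<and> ?meets")
proof -
  have "(\<forall>T. \<Lambda> \<in> T \<and> openin (Sub_inf_top G) T \<longrightarrow> (\<exists>y. y \<in> S \<and> y \<in> T)) \<longleftrightarrow> ?meets"
    if \<Lambda>: "\<Lambda> \<in> topspace (Sub_inf_top G)"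
  proof (intro iffI allI impI)
    fix I E assume hits: "\<forall>T. \<Lambda> \<in> T \<and> openin (Sub_inf_top G) T \<longrightarrow> (\<exists>y. y \<in> S \<and> y \<in> T)"
      and IE: "finite_in G I" "finite_in G E" "\<Lambda> \<in> cylinder G I E"
    obtain y where "y \<in> S" "y \<in> cylinder G I E"
      using hits openin_Sub_inf_top_Int[OF openin_Sub_top_cylinder[OF IE(1,2)]] IE(3) \<Lambda> by blast
    then show "cylinder G I E \<inter> S \<noteq> {}"
      by blast
  next
    fix T assume meets: ?meets and T: "\<Lambda> \<in> T \<and> openin (Sub_inf_top G) T"
    then obtain U where U: "openin (Sub_top G) U" "T = U \<inter> topspace (Sub_inf_top G)"
      unfolding openin_Sub_inf_top_iff by blast
    have "\<Lambda> \<in> U"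
      using T U(2) by blast
    then obtain I E where "finite_in G I" "finite_in G E" "\<Lambda> \<in> cylinder G I E" "cylinder G I E \<subseteq> U"
      by (rule openin_Sub_top_cylinder_nbhd[OF U(1)])
    with meets obtain y where "y \<in> S" "y \<in> U"
      by blast
    with assms U(2) show "\<exists>y. y \<in> S \<and> y \<in> T"
      by blast
  qed
  then show ?thesis
    by (auto simp only: in_closure_of)
qed

section \<open>Generic subgroups\<close>

lemma finite_subset_incseq:
  assumes "incseq C" "finite A" "A \<subseteq> (\<Union>n. C n)"
  obtains n where "A \<subseteq> C n"
proof -
  from assms(2,3) have "\<exists>n. A \<subseteq> C n"
  proof (induction A rule: finite_induct)
    case (insert a A)
    then obtain m1 m2 where "a \<in> C m1" "A \<subseteq> C m2"
      by blast
    moreover have "C m1 \<subseteq> C (max m1 m2)" "C m2 \<subseteq> C (max m1 m2)"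
      using incseqD[OF assms(1)] by simp_all
    ultimately show ?case
      by blast
  qed simp
  with that show thesis
    by blast
qed

lemma refine_cylinder_nbhd:
  assumes W: "openin (Sub_top G) W" "H \<in> W" and H: "H \<in> cylinder G I E"
    and IE: "finite_in G I" "finite_in G E" and a: "a \<in> carrier G"
  obtains I' E' where "finite_in G I'" "finite_in G E'" "I \<subseteq> I'" "E \<subseteq> E'" "a \<in> I' \<union> E'"
    "H \<in> cylinder G I' E'" "cylinder G I' E' \<subseteq> W"
proof -
  obtain I1 E1 where IE1: "finite_in G I1" "finite_in G E1" "H \<in> cylinder G I1 E1" "cylinder G I1 E1 \<subseteq> W"
    by (rule openin_Sub_top_cylinder_nbhd[OF W])
  have HIE: "H \<in> cylinder G (I \<union> I1) (E \<union> E1)"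
    using H IE1(3) cylinder_Int by blast
  have sub: "cylinder G I' E' \<subseteq> W" if "I1 \<subseteq> I'" "E1 \<subseteq> E'" for I' E'
    using cylinder_antimono[OF that] IE1(4) by blast
  show thesis
  proof (cases "a \<in> H")
    case True
    show thesis
    proof (rule that[of "insert a (I \<union> I1)" "E \<union> E1"])
      show "H \<in> cylinder G (insert a (I \<union> I1)) (E \<union> E1)"
        using HIE True unfolding cylinder_def by blast
      show "cylinder G (insert a (I \<union> I1)) (E \<union> E1) \<subseteq> W"
        by (rule sub) auto
    qed (use IE IE1 a in \<open>auto intro: finite_in_insert finite_in_Un\<close>)
  next
    case False
    show thesis
    proof (rule that[of "I \<union> I1" "insert a (E \<union> E1)"])
      show "H \<in> cylinder G (I \<union> I1) (insert a (E \<union> E1))"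
        using HIE False unfolding cylinder_def by blast
      show "cylinder G (I \<union> I1) (insert a (E \<union> E1)) \<subseteq> W"
        by (rule sub) auto
    qed (use IE IE1 a in \<open>auto intro: finite_in_insert finite_in_Un\<close>)
  qed
qed

lemma exists_cylinder_chain:
  fixes e :: "nat \<Rightarrow> 'a" and w :: "nat \<Rightarrow> 'a set set"
  assumes eG: "\<And>k. e k \<in> carrier G"
    and w_open: "\<And>k. openin (Sub_top G) (w k)"
    and w_dense: "\<And>k I E. finite_in G I \<Longrightarrow> finite_in G E \<Longrightarrow>
        cylinder G I E \<inter> P \<noteq> {} \<Longrightarrow> cylinder G I E \<inter> P \<inter> w k \<noteq> {}"
    and start: "finite_in G J" "finite_in G F" "cylinder G J F \<inter> P \<noteq> {}"
  obtains Is Es :: "nat \<Rightarrow> 'a set" where "incseq Is" "incseq Es" "Is 0 = J" "Es 0 = F"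
    "\<forall>n. finite_in G (Is n) \<and> finite_in G (Es n) \<and> cylinder G (Is n) (Es n) \<inter> P \<noteq> {}"
    "\<forall>k. e k \<in> Is (Suc k) \<union> Es (Suc k)" "\<forall>k. cylinder G (Is (Suc k)) (Es (Suc k)) \<subseteq> w k"
proof -
  define good where "good c \<longleftrightarrow> finite_in G (fst c) \<and> finite_in G (snd c) \<and> cylinder G (fst c) (snd c) \<inter> P \<noteq> {}"
    for c :: "'a set \<times> 'a set"
  define step where "step k c c' \<longleftrightarrow> good c' \<and> fst c \<subseteq> fst c' \<and> snd c \<subseteq> snd c' \<and>
      e k \<in> fst c' \<union> snd c' \<and> cylinder G (fst c') (snd c') \<subseteq> w k" for k c c'
  have step_exists: "\<exists>c'. step k c c'" if c: "good c" for c k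
  proof -
    obtain H where H: "H \<in> cylinder G (fst c) (snd c)" "H \<in> P" "H \<in> w k"
      using w_dense c unfolding good_def by blast
    obtain I' E' where "finite_in G I'" "finite_in G E'" "fst c \<subseteq> I'" "snd c \<subseteq> E'" "e k \<in> I' \<union> E'"
      "H \<in> cylinder G I' E'" "cylinder G I' E' \<subseteq> w k"
      using refine_cylinder_nbhd[OF w_open H(3) H(1) _ _ eG] c unfolding good_def by blast
    with H(2) show ?thesis
      unfolding step_def good_def by (intro exI[of _ "(I', E')"]) auto
  qed
  have "\<exists>f. \<forall>n. (good (f n) \<and> (n = 0 \<longrightarrow> f n = (J, F))) \<and> step n (f n) (f (Suc n))"
  proof (rule dependent_nat_choice)
    show "\<exists>c. good c \<and> (0 = 0 \<longrightarrow> c = (J, F))"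
      using start unfolding good_def by (intro exI[of _ "(J, F)"]) simp
  next
    fix c and n :: nat
    assume "good c \<and> (n = 0 \<longrightarrow> c = (J, F))"
    then obtain c' where "step n c c'"
      using step_exists by blast
    then show "\<exists>c'. (good c' \<and> (Suc n = 0 \<longrightarrow> c' = (J, F))) \<and> step n c c'"
      unfolding step_def by blast
  qed
  then obtain f where f: "\<And>n. good (f n)" "f 0 = (J, F)" "\<And>n. step n (f n) (f (Suc n))"
    by blast
  show thesis
  proof (rule that[of "\<lambda>n. fst (f n)" "\<lambda>n. snd (f n)"])
    show "incseq (\<lambda>n. fst (f n))" "incseq (\<lambda>n. snd (f n))"
      by (intro incseq_SucI, use f(3) in \<open>simp add: step_def\<close>)+
  qed (use f in \<open>auto simp: good_def step_def\<close>)
qed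

context group
begin

lemma Union_cylinder_chain:
  fixes Is Es :: "nat \<Rightarrow> 'a set"
  assumes chains: "incseq Is" "incseq Es"
    and nonempty: "\<And>n. cylinder G (Is n) (Es n) \<noteq> {}"
    and decided: "\<And>a. a \<in> carrier G \<Longrightarrow> \<exists>n. a \<in> Is n \<union> Es n"
  shows "(\<Union>n. Is n) \<in> cylinder G (Is n) (Es n)"
proof -
  let ?L = "\<Union>n. Is n"
  have separate: "\<exists>\<Lambda>. subgroup \<Lambda> G \<and> A \<subseteq> \<Lambda> \<and> Es n \<inter> \<Lambda> = {}" if A: "finite A" "A \<subseteq> ?L" for A n
  proof -
    obtain m where "A \<subseteq> Is m"
      by (rule finite_subset_incseq[OF chains(1) A])
    moreover obtain \<Lambda> where "\<Lambda> \<in> cylinder G (Is (max m n)) (Es (max m n))"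
      using nonempty by blast
    moreover have "Is m \<subseteq> Is (max m n)" "Es n \<subseteq> Es (max m n)"
      using incseqD[OF chains(1), of m "max m n"] incseqD[OF chains(2), of n "max m n"] by simp_all
    ultimately show ?thesis
      unfolding cylinder_def by (intro exI[of _ \<Lambda>]) blast
  qed
  have closed: "x \<in> ?L" if x: "x \<in> carrier G" "finite A" "A \<subseteq> ?L"
    "\<And>\<Lambda>. subgroup \<Lambda> G \<Longrightarrow> A \<subseteq> \<Lambda> \<Longrightarrow> x \<in> \<Lambda>" for x A
  proof (rule ccontr)
    assume "x \<notin> ?L"
    then obtain n where "x \<in> Es n"
      using decided[OF x(1)] by blast
    with separate[OF x(2,3), of n] x(4) show False
      by blast
  qed
  have LG: "?L \<subseteq> carrier G"
  proof (intro UN_least)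
    fix n
    obtain \<Lambda> where "\<Lambda> \<in> cylinder G (Is n) (Es n)"
      using nonempty by blast
    then show "Is n \<subseteq> carrier G"
      unfolding cylinder_def using subgroup.subset by blast
  qed
  have "subgroup ?L G"
  proof (rule subgroupI[OF LG])
    have "\<one> \<in> ?L"
      by (rule closed[of _ "{}"]) (auto intro: subgroup.one_closed)
    then show "?L \<noteq> {}"
      by blast
  next
    fix a assume "a \<in> ?L"
    then show "inv a \<in> ?L"
      by (intro closed[of _ "{a}"]) (use LG in \<open>auto intro: subgroup.m_inv_closed\<close>)
  next
    fix a b assume "a \<in> ?L" "b \<in> ?L"
    then show "a \<otimes> b \<in> ?L"
      by (intro closed[of _ "{a, b}"]) (use LG in \<open>auto intro: subgroup.m_closed\<close>)
  qed
  moreover have "a \<notin> ?L" if "a \<in> Es n" for a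
  proof
    assume "a \<in> ?L"
    then obtain \<Lambda> where "{a} \<subseteq> \<Lambda>" "Es n \<inter> \<Lambda> = {}"
      using separate[of "{a}" n] by blast
    with that show False
      by blast
  qed
  ultimately show ?thesis
    unfolding cylinder_def by blast
qed

lemma cylinder_chain_nbhd_base:
  fixes Is Es :: "nat \<Rightarrow> 'a set"
  assumes chains: "incseq Is" "incseq Es"
    and decided: "\<And>a. a \<in> carrier G \<Longrightarrow> \<exists>n. a \<in> Is n \<union> Es n"
    and IE: "finite_in G I" "finite_in G E" "(\<Union>n. Is n) \<in> cylinder G I E"
  obtains n where "cylinder G (Is n) (Es n) \<subseteq> cylinder G I E"
proof -
  have "I \<subseteq> (\<Union>n. Is n)"
    using IE(3) unfolding cylinder_def by blast
  then obtain m1 where m1: "I \<subseteq> Is m1"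
    using finite_subset_incseq[OF chains(1)] IE(1) unfolding finite_in_def by blast
  have "E \<subseteq> (\<Union>n. Es n)"
  proof
    fix a assume a: "a \<in> E"
    then have "a \<in> carrier G" "\<forall>n. a \<notin> Is n"
      using IE unfolding finite_in_def cylinder_def by blast+
    then show "a \<in> (\<Union>n. Es n)"
      using decided by blast
  qed
  then obtain m2 where m2: "E \<subseteq> Es m2"
    using finite_subset_incseq[OF chains(2)] IE(2) unfolding finite_in_def by blast
  have "I \<subseteq> Is (max m1 m2)" "E \<subseteq> Es (max m1 m2)"
    using m1 m2 incseqD[OF chains(1), of m1 "max m1 m2"] incseqD[OF chains(2), of m2 "max m1 m2"] by auto
  then show thesis
    by (rule that[OF cylinder_antimono])
qed

lemma exists_generic_subgroup:
  assumes cG: "countable (carrier G)" and cW: "countable \<W>" "\<W> \<noteq> {}"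
    and W_open: "\<And>W. W \<in> \<W> \<Longrightarrow> openin (Sub_top G) W"
    and W_dense: "\<And>W I E. W \<in> \<W> \<Longrightarrow> finite_in G I \<Longrightarrow> finite_in G E \<Longrightarrow>
        cylinder G I E \<inter> P \<noteq> {} \<Longrightarrow> cylinder G I E \<inter> P \<inter> W \<noteq> {}"
    and start: "finite_in G J" "finite_in G F" "cylinder G J F \<inter> P \<noteq> {}"
  obtains H where "H \<in> cylinder G J F" "H \<in> \<Inter>\<W>"
    "\<forall>I E. finite_in G I \<longrightarrow> finite_in G E \<longrightarrow> H \<in> cylinder G I E \<longrightarrow> cylinder G I E \<inter> P \<noteq> {}"
proof -
  define e where "e = from_nat_into (carrier G)"
  define w where "w = from_nat_into \<W>"
  have eG: "e k \<in> carrier G" for k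
    unfolding e_def by (rule from_nat_into) (use one_closed in blast)
  have wW: "w k \<in> \<W>" for k
    unfolding w_def by (rule from_nat_into[OF cW(2)])
  obtain Is Es where chains: "incseq Is" "incseq Es" and start': "Is 0 = J" "Es 0 = F"
    and good: "\<forall>n. finite_in G (Is n) \<and> finite_in G (Es n) \<and> cylinder G (Is n) (Es n) \<inter> P \<noteq> {}"
    and decides: "\<forall>k. e k \<in> Is (Suc k) \<union> Es (Suc k)"
    and enters: "\<forall>k. cylinder G (Is (Suc k)) (Es (Suc k)) \<subseteq> w k"
    by (rule exists_cylinder_chain[where e = e and w = w and J = J and F = F])
      (rule eG W_open[OF wW] W_dense[OF wW] start | assumption)+
  have nonempty: "cylinder G (Is n) (Es n) \<noteq> {}" for n
    using good by blast
  have decided: "\<exists>n. a \<in> Is n \<union> Es n" if a: "a \<in> carrier G" for a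
  proof -
    obtain k where "e k = a"
      using from_nat_into_surj[OF cG a] unfolding e_def by blast
    then show ?thesis
      using decides by blast
  qed
  let ?H = "\<Union>n. Is n"
  show thesis
  proof (rule that; (intro InterI allI impI)?)
    show "?H \<in> cylinder G J F"
      using Union_cylinder_chain[OF chains nonempty decided, of 0] start' by simp
  next
    fix W assume "W \<in> \<W>"
    then obtain k where "w k = W"
      using from_nat_into_surj[OF cW(1)] unfolding w_def by blast
    then show "?H \<in> W"
      using Union_cylinder_chain[OF chains nonempty decided, of "Suc k"] enters by blast
  next
    fix I E assume IE: "finite_in G I" "finite_in G E" "?H \<in> cylinder G I E"
    obtain n where "cylinder G (Is n) (Es n) \<subseteq> cylinder G I E"
      by (rule cylinder_chain_nbhd_base[OF chains decided IE])
    then show "cylinder G I E \<inter> P \<noteq> {}"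
      using good by blast
  qed
qed

section \<open>Distinct cosets of tuples\<close>

lemma rcos_eq_iff:
  assumes "subgroup H G" "a \<in> carrier G" "b \<in> carrier G"
  shows "H #> a = H #> b \<longleftrightarrow> a \<otimes> inv b \<in> H"
proof
  assume "H #> a = H #> b"
  then have "a \<in> H #> b"
    using assms by (metis rcos_self)
  then show "a \<otimes> inv b \<in> H"
    using subgroup.rcos_module_imp[OF assms(1) is_group assms(3)] by simp
next
  assume "a \<otimes> inv b \<in> H"
  then have "a \<in> H #> b"
    using subgroup.rcos_module_rev[OF assms(1) is_group assms(3) assms(2)] by simp
  then show "H #> a = H #> b"
    using repr_independence assms by (metis)
qed

lemma rcos_translate_iff:
  assumes "subgroup H G" "a \<in> carrier G" "\<gamma> \<in> carrier G" "b \<in> carrier G"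
  shows "(H #> a) #> \<gamma> = H #> b \<longleftrightarrow> a \<otimes> \<gamma> \<otimes> inv b \<in> H"
  using assms by (simp add: coset_mult_assoc subgroup.subset rcos_eq_iff)

lemma rcosets_eq_image: "rcosets H = (\<lambda>a. H #> a) ` carrier G"
  unfolding RCOSETS_def by blast

definition distinct_cosets :: "'a set \<Rightarrow> 'a list \<Rightarrow> bool" where
  "distinct_cosets H xs \<longleftrightarrow> distinct (map (\<lambda>a. H #> a) xs)"

definition ratios :: "'a list \<Rightarrow> 'a set" where
  "ratios xs = {xs ! i \<otimes> inv (xs ! j) | i j. i < length xs \<and> j < length xs \<and> i \<noteq> j}"

lemma finite_in_ratios:
  assumes "set xs \<subseteq> carrier G"
  shows "finite_in G (ratios xs)"
proof -
  have "ratios xs \<subseteq> {xs ! i \<otimes> inv (xs ! j) | i j. i < length xs \<and> j < length xs}"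
    unfolding ratios_def by blast
  moreover have "finite {xs ! i \<otimes> inv (xs ! j) | i j. i < length xs \<and> j < length xs}"
    by (rule finite_image_set2) simp_all
  moreover have "ratios xs \<subseteq> carrier G"
    unfolding ratios_def using assms by (auto dest!: nth_mem)
  ultimately show ?thesis
    unfolding finite_in_def using finite_subset by auto
qed

lemma distinct_cosets_iff_ratios:
  assumes "subgroup H G" "set xs \<subseteq> carrier G"
  shows "distinct_cosets H xs \<longleftrightarrow> ratios xs \<inter> H = {}"
proof -
  have "distinct_cosets H xs \<longleftrightarrow> (\<forall>i<length xs. \<forall>j<length xs. i \<noteq> j \<longrightarrow> H #> xs!i \<noteq> H #> xs!j)"
    unfolding distinct_cosets_def distinct_conv_nth by simp
  also have "\<dots> \<longleftrightarrow> (\<forall>i<length xs. \<forall>j<length xs. i \<noteq> j \<longrightarrow> xs!i \<otimes> inv (xs!j) \<notin> H)"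
  proof -
    have "xs!i \<in> carrier G" if "i < length xs" for i
      using assms(2) nth_mem[OF that] by blast
    then show ?thesis
      using rcos_eq_iff[OF assms(1)] by simp
  qed
  also have "\<dots> \<longleftrightarrow> ratios xs \<inter> H = {}"
    unfolding ratios_def by blast
  finally show ?thesis .
qed

lemma inj_on_nth_distinct_cosets:
  "distinct_cosets H xs \<Longrightarrow> inj_on (\<lambda>i. H #> xs!i) {..<length xs}"
  unfolding distinct_cosets_def distinct_conv_nth inj_on_def by auto

lemma exists_fresh_distinct_cosets:
  assumes "infinite (rcosets H)" "finite F"
  obtains ks where "length ks = n" "set ks \<subseteq> carrier G" "distinct_cosets H ks"
    "\<forall>k\<in>set ks. H #> k \<notin> F"
proof -
  have "infinite (rcosets H - F)"
    using assms by (simp add: Diff_infinite_finite)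
  then obtain C where C: "finite C" "card C = n" "C \<subseteq> rcosets H - F"
    using infinite_arbitrarily_large by blast
  obtain cs where cs: "set cs = C" "distinct cs"
    using finite_distinct_list[OF C(1)] by blast
  define ks where "ks = map (inv_into (carrier G) (\<lambda>a. H #> a)) cs"
  have cs_rcosets: "c \<in> (\<lambda>a. H #> a) ` carrier G" if "c \<in> set cs" for c
    using that cs(1) C(3) unfolding rcosets_eq_image by blast
  have "map (\<lambda>a. H #> a) ks = cs"
    unfolding ks_def map_map by (rule map_idI) (simp add: f_inv_into_f[OF cs_rcosets])
  moreover have "set ks \<subseteq> carrier G"
    unfolding ks_def using cs_rcosets by (auto intro: inv_into_into)
  moreover have "length ks = n"
    using cs C(2) distinct_card unfolding ks_def by fastforce
  moreover have "H #> k \<notin> F" if "k \<in> set ks" for k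
  proof -
    have "H #> k \<in> set cs"
      using that calculation(1) by (metis image_eqI list.set_map)
    then show ?thesis
      using cs(1) C(3) by blast
  qed
  ultimately show thesis
    using that cs(2) unfolding distinct_cosets_def by simp
qed

definition many_cosets :: "nat \<Rightarrow> 'a set set" where
  "many_cosets k = {H. subgroup H G \<and> (\<exists>xs. length xs = k \<and> set xs \<subseteq> carrier G \<and> distinct_cosets H xs)}"

lemma openin_many_cosets: "openin (Sub_top G) (many_cosets k)"
proof (rule openin_Sub_topI)
  fix H assume "H \<in> many_cosets k"
  then obtain xs where H: "subgroup H G" "length xs = k" "set xs \<subseteq> carrier G" "distinct_cosets H xs"
    unfolding many_cosets_def by blast
  have "H \<in> cylinder G {} (ratios xs)"
    using H distinct_cosets_iff_ratios unfolding cylinder_def by simp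
  moreover have "cylinder G {} (ratios xs) \<subseteq> many_cosets k"
  proof
    fix H' assume "H' \<in> cylinder G {} (ratios xs)"
    then have "subgroup H' G" "distinct_cosets H' xs"
      using distinct_cosets_iff_ratios[OF _ H(3)] unfolding cylinder_def by simp_all
    then show "H' \<in> many_cosets k"
      using H(2,3) unfolding many_cosets_def by blast
  qed
  ultimately show "\<exists>I E. finite_in G I \<and> finite_in G E \<and> H \<in> cylinder G I E \<and> cylinder G I E \<subseteq> many_cosets k"
    using finite_in_ratios[OF H(3)] by (intro exI[of _ "{}"] exI[of _ "ratios xs"]) simp
qed

lemma infinite_rcosets_iff_many_cosets:
  assumes "subgroup H G"
  shows "infinite (rcosets H) \<longleftrightarrow> (\<forall>k. H \<in> many_cosets k)"
proof
  assume "infinite (rcosets H)"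
  show "\<forall>k. H \<in> many_cosets k"
  proof
    fix k
    obtain xs where "length xs = k" "set xs \<subseteq> carrier G" "distinct_cosets H xs"
      by (rule exists_fresh_distinct_cosets[OF \<open>infinite (rcosets H)\<close> finite.emptyI])
    then show "H \<in> many_cosets k"
      using assms unfolding many_cosets_def by blast
  qed
next
  assume "\<forall>k. H \<in> many_cosets k"
  show "infinite (rcosets H)"
  proof
    assume fin: "finite (rcosets H)"
    obtain xs where xs: "length xs = Suc (card (rcosets H))" "set xs \<subseteq> carrier G" "distinct_cosets H xs"
      using \<open>\<forall>k. H \<in> many_cosets k\<close> unfolding many_cosets_def by blast
    have "set (map (\<lambda>a. H #> a) xs) \<subseteq> rcosets H"
      using xs(2) rcosetsI[OF subgroup.subset[OF assms]] by auto
    then have "card (set (map (\<lambda>a. H #> a) xs)) \<le> card (rcosets H)"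
      using fin card_mono by blast
    moreover have "card (set (map (\<lambda>a. H #> a) xs)) = length xs"
      using xs(3) unfolding distinct_cosets_def using distinct_card by fastforce
    ultimately show False
      using xs(1) by simp
  qed
qed

definition tuple_transitive :: "'a list \<Rightarrow> 'a list \<Rightarrow> 'a set set" where
  "tuple_transitive xs ys = {H. subgroup H G \<and> (distinct_cosets H xs \<and> distinct_cosets H ys \<longrightarrow>
      (\<exists>\<gamma>\<in>carrier G. \<forall>i<length xs. xs!i \<otimes> \<gamma> \<otimes> inv (ys!i) \<in> H))}"

lemma openin_tuple_transitive:
  assumes xs: "set xs \<subseteq> carrier G" and ys: "set ys \<subseteq> carrier G"
  shows "openin (Sub_top G) (tuple_transitive xs ys)"
proof (rule openin_Sub_topI)
  fix H assume H: "H \<in> tuple_transitive xs ys"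
  then have sH: "subgroup H G"
    unfolding tuple_transitive_def by blast
  show "\<exists>I E. finite_in G I \<and> finite_in G E \<and> H \<in> cylinder G I E \<and> cylinder G I E \<subseteq> tuple_transitive xs ys"
  proof (cases "distinct_cosets H xs \<and> distinct_cosets H ys")
    case False
    then obtain zs where zs: "zs = xs \<or> zs = ys" "\<not> distinct_cosets H zs"
      by blast
    then have zsG: "set zs \<subseteq> carrier G"
      using xs ys by blast
    then obtain q where q: "q \<in> ratios zs" "q \<in> H"
      using zs(2) distinct_cosets_iff_ratios[OF sH] by blast
    have "cylinder G {q} {} \<subseteq> tuple_transitive xs ys"
    proof
      fix H' assume "H' \<in> cylinder G {q} {}"
      then have "subgroup H' G" "q \<in> H'"
        unfolding cylinder_def by simp_all
      then have "\<not> distinct_cosets H' zs"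
        using distinct_cosets_iff_ratios[OF _ zsG] q(1) by blast
      with zs(1) \<open>subgroup H' G\<close> show "H' \<in> tuple_transitive xs ys"
        unfolding tuple_transitive_def by blast
    qed
    moreover have "finite_in G {q}"
      using q finite_in_ratios[OF zsG] unfolding finite_in_def by blast
    moreover have "H \<in> cylinder G {q} {}"
      using q sH unfolding cylinder_def by simp
    ultimately show ?thesis
      by (intro exI[of _ "{q}"] exI[of _ "{}"]) simp
  next
    case True
    then obtain \<gamma> where \<gamma>: "\<gamma> \<in> carrier G" "\<forall>i<length xs. xs!i \<otimes> \<gamma> \<otimes> inv (ys!i) \<in> H"
      using H unfolding tuple_transitive_def by blast
    define A where "A = (\<lambda>i. xs!i \<otimes> \<gamma> \<otimes> inv (ys!i)) ` {..<length xs}"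
    have "A \<subseteq> H"
      using \<gamma> unfolding A_def by blast
    then have "finite_in G A"
      unfolding finite_in_def A_def using subgroup.subset[OF sH] by auto
    moreover have "H \<in> cylinder G A {}"
      using \<open>A \<subseteq> H\<close> sH unfolding cylinder_def by simp
    moreover have "cylinder G A {} \<subseteq> tuple_transitive xs ys"
      using \<gamma>(1) unfolding cylinder_def tuple_transitive_def A_def by blast
    ultimately show ?thesis
      by (intro exI[of _ A] exI[of _ "{}"]) simp
  qed
qed

lemma tuple_transitive_if_highly_transitive:
  assumes sH: "subgroup H G" and HT: "highly_transitive_coset_action G H"
    and len: "length xs = length ys" and xs: "set xs \<subseteq> carrier G" and ys: "set ys \<subseteq> carrier G"
  shows "H \<in> tuple_transitive xs ys"
proof -
  let ?n = "length xs"
  have xG: "xs!i \<in> carrier G" and yG: "ys!i \<in> carrier G" if "i < ?n" for i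
    using len xs ys that nth_mem[of i xs] nth_mem[of i ys] by auto
  have "\<exists>\<gamma>\<in>carrier G. \<forall>i<?n. xs!i \<otimes> \<gamma> \<otimes> inv (ys!i) \<in> H"
    if "distinct_cosets H xs" "distinct_cosets H ys"
  proof -
    have "\<forall>i<?n. H #> xs!i \<in> rcosets H \<and> H #> ys!i \<in> rcosets H"
      using xG yG by (simp add: rcosets_eq_image)
    moreover have "inj_on (\<lambda>i. H #> xs!i) {..<?n}" "inj_on (\<lambda>i. H #> ys!i) {..<?n}"
      using inj_on_nth_distinct_cosets[OF that(1)] inj_on_nth_distinct_cosets[OF that(2)] len by simp_all
    ultimately obtain \<gamma> where \<gamma>: "\<gamma> \<in> carrier G" "\<forall>i<?n. (H #> xs!i) #> \<gamma> = H #> ys!i"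
      using HT[unfolded highly_transitive_coset_action_def, THEN spec[of _ ?n],
          THEN spec[of _ "\<lambda>i. H #> xs!i"], THEN spec[of _ "\<lambda>i. H #> ys!i"]]
      by blast
    then show ?thesis
      using rcos_translate_iff[OF sH] xG yG by auto
  qed
  then show ?thesis
    using sH unfolding tuple_transitive_def by blast
qed

lemma exists_coset_representatives:
  assumes "\<forall>i<n. c i \<in> rcosets H"
  obtains xs where "length xs = n" "set xs \<subseteq> carrier G" "\<forall>i<n. H #> xs!i = c i"
proof -
  define xs where "xs = map (\<lambda>i. inv_into (carrier G) (\<lambda>a. H #> a) (c i)) [0..<n]"
  have "c i \<in> (\<lambda>a. H #> a) ` carrier G" if "i < n" for i
    using assms that by (simp only: rcosets_eq_image)
  then have "xs!i \<in> carrier G \<and> H #> xs!i = c i" if "i < n" for i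
    using that unfolding xs_def by (simp add: inv_into_into f_inv_into_f[of "c i" "(#>) H"])
  moreover have "length xs = n"
    unfolding xs_def by simp
  ultimately show thesis
    using that by (metis in_set_conv_nth subsetI)
qed

lemma highly_transitive_if_tuple_transitive:
  assumes sH: "subgroup H G"
    and tt: "\<And>xs ys. length xs = length ys \<Longrightarrow> set xs \<subseteq> carrier G \<Longrightarrow> set ys \<subseteq> carrier G \<Longrightarrow>
      H \<in> tuple_transitive xs ys"
  shows "highly_transitive_coset_action G H"
  unfolding highly_transitive_coset_action_def
proof (intro allI impI)
  fix n and x y :: "nat \<Rightarrow> 'a set"
  assume c: "(\<forall>i<n. x i \<in> rcosets H \<and> y i \<in> rcosets H) \<and> inj_on x {..<n} \<and> inj_on y {..<n}"
  obtain xs where xs: "length xs = n" "set xs \<subseteq> carrier G" "\<forall>i<n. H #> xs!i = x i"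
    by (rule exists_coset_representatives[where c = x and n = n and H = H]) (use c in blast)
  obtain ys where ys: "length ys = n" "set ys \<subseteq> carrier G" "\<forall>i<n. H #> ys!i = y i"
    by (rule exists_coset_representatives[where c = y and n = n and H = H]) (use c in blast)
  have "map (\<lambda>a. H #> a) xs = map x [0..<n]" "map (\<lambda>a. H #> a) ys = map y [0..<n]"
    using xs ys by (auto intro!: nth_equalityI)
  then have "distinct_cosets H xs" "distinct_cosets H ys"
    unfolding distinct_cosets_def using c by (simp_all add: distinct_map lessThan_atLeast0)
  moreover have "H \<in> tuple_transitive xs ys"
    using tt xs ys by simp
  ultimately obtain \<gamma> where \<gamma>: "\<gamma> \<in> carrier G" "\<forall>i<n. xs!i \<otimes> \<gamma> \<otimes> inv (ys!i) \<in> H"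
    using xs(1) unfolding tuple_transitive_def by auto
  have "x i #> \<gamma> = y i" if "i < n" for i
  proof -
    have "xs!i \<in> carrier G" "ys!i \<in> carrier G"
      using that xs(1,2) ys(1,2) nth_mem[of i xs] nth_mem[of i ys] by auto
    then show ?thesis
      using \<gamma> that xs(3) ys(3) rcos_translate_iff[OF sH] by metis
  qed
  with \<gamma>(1) show "\<exists>\<gamma>\<in>carrier G. \<forall>i<n. x i #> \<gamma> = y i"
    by blast
qed

section \<open>Density of the transitivity conditions\<close>

lemma cond_star_move:
  assumes cs: "cond_star G P" and PS: "P \<subseteq> topspace (Sub_inf_top G)"
    and \<Lambda>: "\<Lambda> \<in> P" "\<Lambda> \<in> cylinder G I E" and IE: "finite_in G I" "finite_in G E"
    and xs: "set xs \<subseteq> carrier G" and ys: "set ys \<subseteq> carrier G"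
    and len: "length xs = length ys" "xs \<noteq> []" and distinct: "distinct_cosets \<Lambda> (xs @ ys)"
  obtains \<Lambda>' \<gamma> where "\<Lambda>' \<in> P" "\<Lambda>' \<in> cylinder G I E" "\<gamma> \<in> carrier G"
    "\<forall>i<length xs. xs!i \<otimes> \<gamma> \<otimes> inv (ys!i) \<in> \<Lambda>'"
proof -
  define d where "d = length xs"
  define zs where "zs = xs @ ys"
  have d: "d \<ge> 1" "length zs = 2 * d"
    using len unfolding d_def zs_def by (cases xs, simp_all)
  have zG: "zs!i \<in> carrier G" if "i < length zs" for i
    using xs ys nth_mem[OF that] unfolding zs_def by auto
  \<comment> \<open>condition \<open>(\<ast>)\<close> indexes the tuple from \<open>1\<close>\<close>
  define g where "g i = zs!(i - 1)" for i
  have gG: "\<forall>i\<in>{1..2*d}. g i \<in> carrier G"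
    unfolding g_def using zG d(2) by auto
  have "inj_on (\<lambda>i. \<Lambda> #> g i) {1..2*d}"
  proof (rule inj_onI)
    fix i j assume ij: "i \<in> {1..2*d}" "j \<in> {1..2*d}" "\<Lambda> #> g i = \<Lambda> #> g j"
    then have "i - 1 \<in> {..<length zs}" "j - 1 \<in> {..<length zs}"
      using d(2) by auto
    with ij(3) have "i - 1 = j - 1"
      using inj_on_nth_distinct_cosets[OF distinct[folded zs_def]] unfolding g_def inj_on_def by blast
    with ij(1,2) show "i = j"
      by auto
  qed
  moreover define V where "V = cylinder G I E \<inter> topspace (Sub_inf_top G)"
  moreover have "openin (Sub_inf_top G) V"
    unfolding V_def by (intro openin_Sub_inf_top_Int openin_Sub_top_cylinder IE)
  moreover have "\<Lambda> \<in> V"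
    using \<Lambda> PS unfolding V_def by blast
  ultimately obtain \<Lambda>' \<gamma> where \<Lambda>': "\<Lambda>' \<in> P \<inter> V" "\<gamma> \<in> carrier G"
    "\<forall>i\<in>{1..d}. (\<Lambda>' #> g i) #> \<gamma> = \<Lambda>' #> g (i + d)"
    using cs[unfolded cond_star_def, rule_format, OF \<Lambda>(1) d(1) conjI[OF gG]] by blast
  have s\<Lambda>': "subgroup \<Lambda>' G"
    using \<Lambda>'(1) PS unfolding topspace_Sub_inf_top by blast
  have "xs!i \<otimes> \<gamma> \<otimes> inv (ys!i) \<in> \<Lambda>'" if "i < d" for i
  proof -
    have "(\<Lambda>' #> g (Suc i)) #> \<gamma> = \<Lambda>' #> g (Suc i + d)"
      using \<Lambda>'(3) that by simp
    then have "(\<Lambda>' #> zs!i) #> \<gamma> = \<Lambda>' #> zs!(i + d)"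
      unfolding g_def by simp
    moreover have "zs!i = xs!i" "zs!(i + d) = ys!i"
      using that unfolding zs_def d_def by (simp_all add: nth_append)
    moreover have "i < length zs" "i + d < length zs"
      using that d(2) by simp_all
    ultimately show ?thesis
      using rcos_translate_iff[OF s\<Lambda>' _ \<Lambda>'(2)] zG by metis
  qed
  with \<Lambda>' that show thesis
    unfolding V_def d_def by blast
qed

lemma translate_trans:
  assumes H: "subgroup H G" and G: "a \<in> carrier G" "g \<in> carrier G" "k \<in> carrier G" "h \<in> carrier G" "b \<in> carrier G"
    and ak: "a \<otimes> g \<otimes> inv k \<in> H" and kb: "k \<otimes> h \<otimes> inv b \<in> H"
  shows "a \<otimes> (g \<otimes> h) \<otimes> inv b \<in> H"
proof -
  have "(a \<otimes> g \<otimes> inv k) \<otimes> (k \<otimes> h \<otimes> inv b) \<in> H"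
    by (rule subgroup.m_closed[OF H ak kb])
  moreover have "(a \<otimes> g \<otimes> inv k) \<otimes> (k \<otimes> h \<otimes> inv b) = a \<otimes> (g \<otimes> h) \<otimes> inv b"
    using G by (simp add: m_assoc, simp add: m_assoc[symmetric])
  ultimately show ?thesis
    by simp
qed

lemma cond_star_tuple_transitive:
  assumes cs: "cond_star G P" and PS: "P \<subseteq> topspace (Sub_inf_top G)"
    and IE: "finite_in G I" "finite_in G E" "cylinder G I E \<inter> P \<noteq> {}"
    and xs: "set xs \<subseteq> carrier G" and ys: "set ys \<subseteq> carrier G" and len: "length xs = length ys"
  shows "cylinder G I E \<inter> P \<inter> tuple_transitive xs ys \<noteq> {}"
proof -
  obtain H0 where H0: "H0 \<in> P" "H0 \<in> cylinder G I E"
    using IE(3) by blast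
  have sH0: "subgroup H0 G" and inf0: "infinite (rcosets H0)"
    using H0(1) PS unfolding topspace_Sub_inf_top by blast+
  show ?thesis
  proof (cases "distinct_cosets H0 xs \<and> distinct_cosets H0 ys \<and> xs \<noteq> []")
    case False
    moreover have "\<forall>i<length xs. xs!i \<otimes> \<one> \<otimes> inv (ys!i) \<in> H0" if "xs = []"
      using that by simp
    ultimately have "H0 \<in> tuple_transitive xs ys"
      using sH0 unfolding tuple_transitive_def by blast
    with H0 show ?thesis
      by blast
  next
    case True
    define n where "n = length xs"
    obtain ks where ks: "length ks = n" "set ks \<subseteq> carrier G" "distinct_cosets H0 ks"
      "\<forall>k\<in>set ks. H0 #> k \<notin> (\<lambda>a. H0 #> a) ` (set xs \<union> set ys)"
      by (rule exists_fresh_distinct_cosets[OF inf0 finite_imageI[OF finite_UnI[OF finite_set finite_set]]])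
    have xk: "distinct_cosets H0 (xs @ ks)" and ky: "distinct_cosets H0 (ks @ ys)"
      using True ks(3,4) unfolding distinct_cosets_def by auto
    have kyG: "set (ks @ ys) \<subseteq> carrier G"
      using ys ks(2) by simp
    have lens: "length xs = length ks" "ks \<noteq> []" "length ks = length ys"
      using True ks(1) len unfolding n_def by auto
    \<comment> \<open>first move \<open>xs\<close> onto \<open>ks\<close>, keeping the \<open>H0 ks\<^sub>i\<close> and \<open>H0 ys\<^sub>i\<close> distinct\<close>
    have "H0 \<in> cylinder G I (E \<union> ratios (ks @ ys))"
      using H0(2) distinct_cosets_iff_ratios[OF sH0 kyG] ky unfolding cylinder_def by blast
    then obtain H1 \<gamma>1 where H1: "H1 \<in> P" "H1 \<in> cylinder G I (E \<union> ratios (ks @ ys))" "\<gamma>1 \<in> carrier G"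
      "\<forall>i<n. xs!i \<otimes> \<gamma>1 \<otimes> inv (ks!i) \<in> H1"
      unfolding n_def
      by (rule cond_star_move[OF cs PS H0(1) _ IE(1) finite_in_Un[OF IE(2) finite_in_ratios[OF kyG]]
            xs ks(2) lens(1) _ xk]) (use True in simp)
    have sH1: "subgroup H1 G"
      using H1(2) unfolding cylinder_def by blast
    have ky1: "distinct_cosets H1 (ks @ ys)"
      using H1(2) distinct_cosets_iff_ratios[OF sH1 kyG] unfolding cylinder_def by blast
    \<comment> \<open>then move \<open>ks\<close> onto \<open>ys\<close> inside the neighbourhood remembering the first move\<close>
    define A1 where "A1 = (\<lambda>i. xs!i \<otimes> \<gamma>1 \<otimes> inv (ks!i)) ` {..<n}"
    have A1H1: "A1 \<subseteq> H1"
      using H1(4) unfolding A1_def by blast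
    then have A1: "finite_in G A1"
      unfolding finite_in_def A1_def using subgroup.subset[OF sH1] by auto
    have "H1 \<in> cylinder G (I \<union> A1) E"
      using H1(2) A1H1 unfolding cylinder_def by blast
    then obtain H2 \<gamma>2 where H2: "H2 \<in> P" "H2 \<in> cylinder G (I \<union> A1) E" "\<gamma>2 \<in> carrier G"
      "\<forall>i<n. ks!i \<otimes> \<gamma>2 \<otimes> inv (ys!i) \<in> H2"
      unfolding ks(1)[symmetric]
      by (rule cond_star_move[OF cs PS H1(1) _ finite_in_Un[OF IE(1) A1] IE(2) ks(2) ys lens(3) lens(2) ky1])
    have sH2: "subgroup H2 G" and A1H2: "A1 \<subseteq> H2" and "H2 \<in> cylinder G I E"
      using H2(2) unfolding cylinder_def by auto
    have "xs!i \<otimes> (\<gamma>1 \<otimes> \<gamma>2) \<otimes> inv (ys!i) \<in> H2" if i: "i < n" for i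
    proof -
      have "xs!i \<in> set xs" "ks!i \<in> set ks" "ys!i \<in> set ys"
        using i ks(1) len unfolding n_def by simp_all
      then have G: "xs!i \<in> carrier G" "ks!i \<in> carrier G" "ys!i \<in> carrier G"
        using xs ys ks(2) by blast+
      have "xs!i \<otimes> \<gamma>1 \<otimes> inv (ks!i) \<in> H2"
        using A1H2 i unfolding A1_def by blast
      moreover have "ks!i \<otimes> \<gamma>2 \<otimes> inv (ys!i) \<in> H2"
        using H2(4) i by blast
      ultimately show ?thesis
        by (rule translate_trans[OF sH2 G(1) H1(3) G(2) H2(3) G(3)])
    qed
    then have "H2 \<in> tuple_transitive xs ys"
      using sH2 H1(3) H2(3) unfolding tuple_transitive_def n_def by blast
    with H2(1) \<open>H2 \<in> cylinder G I E\<close> show ?thesis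
      by blast
  qed
qed

section \<open>High transitivity is generic\<close>

definition tuple_pairs :: "('a list \<times> 'a list) set" where
  "tuple_pairs = {p. length (fst p) = length (snd p) \<and> set (fst p) \<subseteq> carrier G \<and> set (snd p) \<subseteq> carrier G}"

lemma countable_tuple_pairs:
  assumes "countable (carrier G)"
  shows "countable tuple_pairs"
proof (rule countable_subset)
  show "tuple_pairs \<subseteq> lists (carrier G) \<times> lists (carrier G)"
    unfolding tuple_pairs_def by auto
  show "countable (lists (carrier G) \<times> lists (carrier G))"
    using assms by simp
qed

lemma HT_eq_Inter_tuple_transitive:
  "HT G = topspace (Sub_inf_top G) \<inter> \<Inter>((\<lambda>p. tuple_transitive (fst p) (snd p)) ` tuple_pairs)"
proof (intro equalityI subsetI)
  fix H assume "H \<in> HT G"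
  then show "H \<in> topspace (Sub_inf_top G) \<inter> \<Inter>((\<lambda>p. tuple_transitive (fst p) (snd p)) ` tuple_pairs)"
    unfolding HT_def topspace_Sub_inf_top tuple_pairs_def using tuple_transitive_if_highly_transitive by auto
next
  fix H assume H: "H \<in> topspace (Sub_inf_top G) \<inter> \<Inter>((\<lambda>p. tuple_transitive (fst p) (snd p)) ` tuple_pairs)"
  have "H \<in> tuple_transitive xs ys"
    if "length xs = length ys" "set xs \<subseteq> carrier G" "set ys \<subseteq> carrier G" for xs ys
  proof -
    have "(xs, ys) \<in> tuple_pairs"
      using that unfolding tuple_pairs_def by simp
    with H show ?thesis
      by force
  qed
  then show "H \<in> HT G"
    using H highly_transitive_if_tuple_transitive unfolding HT_def topspace_Sub_inf_top by blast
qed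

lemma gdelta_in_HT:
  assumes "countable (carrier G)"
  shows "gdelta_in (Sub_inf_top G) (HT G)"
proof -
  define \<U> where "\<U> = insert (topspace (Sub_inf_top G))
    ((\<lambda>p. tuple_transitive (fst p) (snd p) \<inter> topspace (Sub_inf_top G)) ` tuple_pairs)"
  have "HT G = \<Inter>\<U>"
    unfolding \<U>_def HT_eq_Inter_tuple_transitive by auto
  moreover have "gdelta_in (Sub_inf_top G) (\<Inter>\<U>)"
  proof (rule gdelta_in_Inter)
    show "countable \<U>" "\<U> \<noteq> {}"
      unfolding \<U>_def using countable_tuple_pairs[OF assms] by simp_all
    fix U assume "U \<in> \<U>"
    then have "openin (Sub_inf_top G) U"
      unfolding \<U>_def tuple_pairs_def by (auto intro!: openin_Sub_inf_top_Int openin_tuple_transitive)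
    then show "gdelta_in (Sub_inf_top G) U"
      by (rule open_imp_gdelta_in)
  qed
  ultimately show ?thesis
    by simp
qed

definition HT_conditions :: "'a set set set" where
  "HT_conditions = range many_cosets \<union> (\<lambda>p. tuple_transitive (fst p) (snd p)) ` tuple_pairs"

lemma countable_HT_conditions: "countable (carrier G) \<Longrightarrow> countable HT_conditions"
  unfolding HT_conditions_def using countable_tuple_pairs by simp

lemma openin_HT_conditions: "W \<in> HT_conditions \<Longrightarrow> openin (Sub_top G) W"
  unfolding HT_conditions_def tuple_pairs_def by (auto intro: openin_many_cosets openin_tuple_transitive)

lemma cond_star_HT_conditions:
  assumes cs: "cond_star G P" and PS: "P \<subseteq> topspace (Sub_inf_top G)" and W: "W \<in> HT_conditions"
    and IE: "finite_in G I" "finite_in G E" "cylinder G I E \<inter> P \<noteq> {}"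
  shows "cylinder G I E \<inter> P \<inter> W \<noteq> {}"
proof -
  from W consider k where "W = many_cosets k"
    | p where "W = tuple_transitive (fst p) (snd p)" "p \<in> tuple_pairs"
    unfolding HT_conditions_def by blast
  then show ?thesis
  proof cases
    case 1
    have "P \<subseteq> many_cosets k"
      using PS infinite_rcosets_iff_many_cosets unfolding topspace_Sub_inf_top by blast
    with 1 IE(3) show ?thesis
      by blast
  next
    case 2
    then show ?thesis
      using cond_star_tuple_transitive[OF cs PS IE] unfolding tuple_pairs_def by blast
  qed
qed

lemma HT_if_Inter_HT_conditions:
  assumes "subgroup H G" "H \<in> \<Inter>HT_conditions"
  shows "H \<in> HT G"
proof -
  have "H \<in> many_cosets k" for k
    using assms(2) unfolding HT_conditions_def by blast
  then have "H \<in> topspace (Sub_inf_top G)"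
    unfolding topspace_Sub_inf_top using infinite_rcosets_iff_many_cosets assms(1) by blast
  with assms(2) show ?thesis
    unfolding HT_eq_Inter_tuple_transitive HT_conditions_def by blast
qed

lemma HT_dense_in_closure:
  assumes cG: "countable (carrier G)" and PS: "P \<subseteq> topspace (Sub_inf_top G)" and cs: "cond_star G P"
  shows "Sub_inf_top G closure_of P \<subseteq> Sub_inf_top G closure_of (HT G \<inter> Sub_inf_top G closure_of P)"
proof
  let ?Y = "Sub_inf_top G closure_of P"
  fix \<Lambda> assume \<Lambda>: "\<Lambda> \<in> ?Y"
  have "HT G \<inter> ?Y \<subseteq> topspace (Sub_inf_top G)"
    using closure_of_subset_topspace[of "Sub_inf_top G" P] by blast
  moreover have "cylinder G I E \<inter> (HT G \<inter> ?Y) \<noteq> {}"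
    if IE: "finite_in G I" "finite_in G E" "\<Lambda> \<in> cylinder G I E" for I E
  proof -
    have "cylinder G I E \<inter> P \<noteq> {}"
      using \<Lambda> IE unfolding in_Sub_inf_top_closure_iff[OF PS] by blast
    then obtain H where H: "H \<in> cylinder G I E" "H \<in> \<Inter>HT_conditions"
      "\<forall>I E. finite_in G I \<longrightarrow> finite_in G E \<longrightarrow> H \<in> cylinder G I E \<longrightarrow> cylinder G I E \<inter> P \<noteq> {}"
      using exists_generic_subgroup[OF cG countable_HT_conditions[OF cG] _ openin_HT_conditions
          cond_star_HT_conditions[OF cs PS] IE(1,2)]
      unfolding HT_conditions_def by blast
    have "H \<in> HT G"
      using H(1,2) HT_if_Inter_HT_conditions unfolding cylinder_def by blast
    moreover from this have "H \<in> ?Y"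
      unfolding in_Sub_inf_top_closure_iff[OF PS] using H(3) unfolding HT_def topspace_Sub_inf_top by blast
    ultimately show ?thesis
      using H(1) by blast
  qed
  ultimately show "\<Lambda> \<in> Sub_inf_top G closure_of (HT G \<inter> ?Y)"
    unfolding in_Sub_inf_top_closure_iff[OF \<open>HT G \<inter> ?Y \<subseteq> _\<close>]
    using \<Lambda> closure_of_subset_topspace[of "Sub_inf_top G" P] by blast
qed

end

theorem mainTheorem7:
  fixes G :: "('a, 'b) monoid_scheme" and P :: "'a set set"
  assumes "group G"
    and "countable (carrier G)"
    and "P \<subseteq> topspace (Sub_inf_top G)"
    and "cond_star G P"
  shows "gdelta_in (subtopology (Sub_inf_top G) (Sub_inf_top G closure_of P))
            (HT G \<inter> (Sub_inf_top G closure_of P))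
       \<and> (subtopology (Sub_inf_top G) (Sub_inf_top G closure_of P)) closure_of
            (HT G \<inter> (Sub_inf_top G closure_of P))
         = Sub_inf_top G closure_of P"
proof
  interpret group G by fact
  let ?Y = "Sub_inf_top G closure_of P"
  show "gdelta_in (subtopology (Sub_inf_top G) ?Y) (HT G \<inter> ?Y)"
    unfolding gdelta_in_subtopology by (intro exI[of _ "HT G"] conjI gdelta_in_HT[OF assms(2)] refl)
  have "?Y \<inter> (HT G \<inter> ?Y) = HT G \<inter> ?Y"
    by blast
  then have "subtopology (Sub_inf_top G) ?Y closure_of (HT G \<inter> ?Y) = ?Y \<inter> Sub_inf_top G closure_of (HT G \<inter> ?Y)"
    using closure_of_subtopology[of "Sub_inf_top G" ?Y "HT G \<inter> ?Y"] by simp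
  then show "subtopology (Sub_inf_top G) ?Y closure_of (HT G \<inter> ?Y) = ?Y"
    using Int_absorb2[OF HT_dense_in_closure[OF assms(2-4)]] by simp
qed

end
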